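(* Let $A$ be an $m\times n$ matrix with columns $a_1,\dots,a_n$. Then $A$ is optimally sparse if and only if for every nonzero vector $x\in\mathbb{Q}^n$, $\|Ax\|_0\ge \max_{i\in\operatorname{supp}(x)}\|a_i\|_0$.
   Context: $\|v\|_0$ is the number of nonzero entries of a vector $v$; $\operatorname{supp}(x)=\{i: x_i\neq 0\}$; $\operatorname{nnz}(M)$ is the number of nonzero entries of a matrix $M$. $A$ is optimally sparse if $\operatorname{nnz}(AX)\ge\operatorname{nnz}(A)$ for every invertible $n\times n$ matrix $X$. *)

theory Defs
  imports "HOL-Analysis.Analysis"
begin

definition vnnz :: "'a::zero ^ 'n \<Rightarrow> nat" where
  "vnnz v = card {i. v $ i \<noteq> 0}"

definition supp :: "'a::zero ^ 'n \<Rightarrow> 'n set" where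
  "supp x = {i. x $ i \<noteq> 0}"

definition nnz :: "'a::zero ^ 'n ^ 'm \<Rightarrow> nat" where
  "nnz M = card {(i, j). M $ i $ j \<noteq> 0}"

definition optimally_sparse :: "rat ^ 'n ^ 'm \<Rightarrow> bool" where
  "optimally_sparse A \<longleftrightarrow>
     (\<forall>X :: rat ^ 'n ^ 'n. invertible X \<longrightarrow> nnz (A ** X) \<ge> nnz A)"

end

theory Submission imports Defs begin

(*
  Proof idea.  The number of nonzeros of a matrix is the sum of the numbers of nonzeros
  of its columns, and the j-th column of A ** X is A *v (column j X).

  (=>) Given x \<noteq> 0, pick k \<in> supp x for which column k of A has the most nonzeros.
  The identity matrix with its k-th column replaced by x is invertible (as x$k \<noteq> 0),
  and right-multiplying A by it replaces column k of A by A *v x, leaving the other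
  columns unchanged.  Optimal sparsity then gives vnnz (A *v x) \<ge> vnnz (column k A).

  (<=) An invertible X has nonzero determinant, so some permutation p has
  X$i$(p i) \<noteq> 0 for all i; hence (inv p) j \<in> supp (column j X), and the hypothesis
  bounds vnnz (column (inv p j) A) by vnnz (A *v column j X).  Summing over j gives
  nnz A \<le> nnz (A ** X).
*)

lemma column_matrix_mult: "column j (A ** X) = A *v column j X"
  by (simp add: column_def matrix_matrix_mult_def matrix_vector_mult_def vec_eq_iff)

lemma matrix_vector_mult_axis: "(A::'a::comm_semiring_1^'n^'m) *v axis j 1 = column j A"
  by (simp add: matrix_vector_mult_def axis_def column_def vec_eq_iff if_distrib cong: if_cong)

lemma nnz_eq_sum_columns: "nnz (M::'a::zero^'n^'m) = (\<Sum>j\<in>UNIV. vnnz (column j M))"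
proof -
  have "{(i, j). M $ i $ j \<noteq> 0} = (\<Union>j. (\<lambda>i. (i, j)) ` {i. M $ i $ j \<noteq> 0})"
    by auto
  then have "nnz M = (\<Sum>j\<in>UNIV. card ((\<lambda>i. (i, j)) ` {i. M $ i $ j \<noteq> 0}))"
    unfolding nnz_def by (simp, subst card_UN_disjoint, auto)
  also have "\<dots> = (\<Sum>j\<in>UNIV. vnnz (column j M))"
    by (intro sum.cong refl, subst card_image) (auto simp: inj_on_def vnnz_def column_def)
  finally show ?thesis .
qed

text \<open>If det X \<noteq> 0, one of the terms of the Leibniz expansion is nonzero, i.e. there is a
  permutation p with X$i$(p i) \<noteq> 0 for every row i.\<close>
lemma nonzero_transversal:
  fixes X :: "'a::comm_ring_1^'n^'n"
  assumes "det X \<noteq> 0"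
  shows "\<exists>p. p permutes UNIV \<and> (\<forall>i. X $ i $ p i \<noteq> 0)"
proof (rule ccontr)
  assume none: "\<not> ?thesis"
  have "of_int (sign p) * (\<Prod>i\<in>UNIV. X $ i $ p i) = 0" if perm: "p permutes UNIV" for p
  proof -
    obtain i where "X $ i $ p i = 0" using none perm by blast
    then have "(\<Prod>i\<in>UNIV. X $ i $ p i) = 0" by (intro prod_zero) auto
    then show ?thesis by simp
  qed
  then have "det X = 0"
    unfolding det_def by (intro sum.neutral) auto
  with assms show False by simp
qed

text \<open>The identity matrix whose k-th column is replaced by x.  Right-multiplying by it
  replaces the k-th column of a matrix A by A *v x.\<close>
definition replace_column :: "'n \<Rightarrow> 'a::comm_ring_1^'n \<Rightarrow> 'a^'n^'n" where
  "replace_column k x = (\<chi> i j. if j = k then x $ i else if i = j then 1 else 0)"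

lemma column_replace_column:
  "column j (replace_column k x) = (if j = k then x else axis j 1)"
  by (auto simp: replace_column_def column_def axis_def vec_eq_iff)

lemma replace_column_mult_vector:
  "(replace_column k x *v v) $ i = x $ i * v $ k + (if i = k then 0 else v $ i)"
proof -
  have "(replace_column k x *v v) $ i =
      (\<Sum>j\<in>UNIV. (if j = k then x $ i * v $ k else 0) + (if j = i then (if i = k then 0 else v $ i) else 0))"
    unfolding replace_column_def matrix_vector_mult_def vec_lambda_beta
    by (intro sum.cong) auto
  then show ?thesis by (simp add: sum.distrib)
qed

text \<open>Over a field the replacement matrix is invertible as soon as its pivot x$k is nonzero:
  its kernel is trivial.\<close>
lemma invertible_replace_column:
  fixes x :: "'a::field^'n"
  assumes xk: "x $ k \<noteq> 0"
  shows "invertible (replace_column k x)"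
proof -
  have "v = 0" if v0: "replace_column k x *v v = 0" for v
  proof -
    have comp: "x $ i * v $ k + (if i = k then 0 else v $ i) = 0" for i
      using replace_column_mult_vector[of k x v i] v0 by simp
    have vk: "v $ k = 0" using comp[of k] xk by simp
    have "v $ i = 0" for i using comp[of i] vk by (cases "i = k") auto
    then show "v = 0" by (simp add: vec_eq_iff)
  qed
  then have "inj ((*v) (replace_column k x))"
    by (metis vec.inj_iff_eq_0)
  then show ?thesis
    using matrix_left_invertible_injective invertible_left_inverse by blast
qed

lemma nnz_mult_replace_column:
  "nnz (A ** replace_column k x) + vnnz (column k A) = nnz A + vnnz (A *v x)"
proof -
  have cols: "column j (A ** replace_column k x) = (if j = k then A *v x else column j A)" for j
    by (simp add: column_matrix_mult column_replace_column matrix_vector_mult_axis)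
  show ?thesis
    unfolding nnz_eq_sum_columns cols by (simp add: sum.remove[of UNIV k])
qed

text \<open>Necessity: test optimal sparsity against the column replacement at a support index
  whose column of A is densest.\<close>
lemma optimally_sparse_column_bound:
  fixes A :: "rat^'n^'m"
  assumes opt: "optimally_sparse A" and "x \<noteq> 0"
  shows "vnnz (A *v x) \<ge> Max ((\<lambda>i. vnnz (column i A)) ` supp x)"
proof -
  have "supp x \<noteq> {}" using \<open>x \<noteq> 0\<close> by (auto simp: supp_def vec_eq_iff)
  then have "Max ((\<lambda>i. vnnz (column i A)) ` supp x) \<in> (\<lambda>i. vnnz (column i A)) ` supp x"
    by (intro Max_in) auto
  then obtain k where "k \<in> supp x"
    and max_k: "Max ((\<lambda>i. vnnz (column i A)) ` supp x) = vnnz (column k A)"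
    by auto
  then have "invertible (replace_column k x)"
    by (intro invertible_replace_column) (simp add: supp_def)
  then have "nnz A \<le> nnz (A ** replace_column k x)"
    using opt unfolding optimally_sparse_def by blast
  then show ?thesis
    using nnz_mult_replace_column[of A k x] max_k by simp
qed

text \<open>Sufficiency: match every column of A ** X with a distinct column of A through a
  nonzero transversal of X.\<close>
lemma column_bound_optimally_sparse:
  fixes A :: "rat^'n^'m"
  assumes bound: "\<forall>x :: rat^'n. x \<noteq> 0 \<longrightarrow>
      vnnz (A *v x) \<ge> Max ((\<lambda>i. vnnz (column i A)) ` supp x)"
  shows "optimally_sparse A"
  unfolding optimally_sparse_def
proof (intro allI impI)
  fix X :: "rat^'n^'n"
  assume "invertible X"
  then have "det X \<noteq> 0" by (simp add: invertible_det_nz)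
  then obtain p where p: "p permutes UNIV" and diag: "\<forall>i. X $ i $ p i \<noteq> 0"
    using nonzero_transversal by blast
  have column_le: "vnnz (column (inv p j) A) \<le> vnnz (A *v column j X)" for j
  proof -
    have "X $ inv p j $ j \<noteq> 0" using diag p by (metis permutes_inverses(1))
    then have "inv p j \<in> supp (column j X)" and "column j X \<noteq> 0"
      by (auto simp: supp_def column_def vec_eq_iff)
    then have "vnnz (column (inv p j) A) \<le> Max ((\<lambda>i. vnnz (column i A)) ` supp (column j X))"
      by (intro Max_ge) auto
    also have "\<dots> \<le> vnnz (A *v column j X)"
      using bound \<open>column j X \<noteq> 0\<close> by blast
    finally show ?thesis .
  qed
  have "nnz A = (\<Sum>j\<in>UNIV. vnnz (column (inv p j) A))"
    unfolding nnz_eq_sum_columns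
    using sum.permute[OF permutes_inv[OF p], of "\<lambda>i. vnnz (column i A)"]
    by (simp add: comp_def)
  also have "\<dots> \<le> (\<Sum>j\<in>UNIV. vnnz (A *v column j X))"
    by (intro sum_mono column_le)
  also have "\<dots> = nnz (A ** X)"
    unfolding nnz_eq_sum_columns column_matrix_mult ..
  finally show "nnz A \<le> nnz (A ** X)" .
qed

theorem mainTheorem5:
  fixes A :: "rat ^ 'n ^ 'm"
  shows "optimally_sparse A \<longleftrightarrow>
    (\<forall>x :: rat ^ 'n. x \<noteq> 0 \<longrightarrow>
       vnnz (A *v x) \<ge> Max ((\<lambda>i. vnnz (column i A)) ` supp x))"
proof
  assume "optimally_sparse A"
  then show "\<forall>x :: rat ^ 'n. x \<noteq> 0 \<longrightarrow>
      vnnz (A *v x) \<ge> Max ((\<lambda>i. vnnz (column i A)) ` supp x)"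
    using optimally_sparse_column_bound by blast
qed (rule column_bound_optimally_sparse)

end
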